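(* Let $E\in\mathbb N$ and let $0<\eta<\frac{2}{E}$. Let $\ket\Psi=\sum_{k\ge0}\psi_k\ket k$ be a normalised pure state, so $\ket\Psi\!\bra\Psi=\sum_{k,l=0}^{+\infty}\psi_k\psi_l^*\ket k\!\bra l$, and let $\rho=\sum_{k,l=0}^{E}\rho_{kl}\ket k\!\bra l$ be a density operator with support bounded by $E$ in the Fock basis. Then $$\left|F(\Psi,\rho)-\mathbb E_{\alpha\leftarrow Q_\rho}\big[f_\Psi(\alpha,\eta)\big]\right|\le \eta K_\Psi\le \frac{\eta}{2}(E+1)(E+2),$$ where $F(\Psi,\rho)=\bra\Psi\rho\ket\Psi$.
   Context: $\mathcal H$ is the single-mode Hilbert space with Fock basis $\{\ket n\}_{n\in\mathbb N}$; $\ket\alpha$ is a coherent state. The Husimi function is $Q_\rho(\alpha)=\frac1\pi\bra\alpha\rho\ket\alpha$ (the output distribution of heterodyne detection), and $\mathbb E_{\alpha\leftarrow Q_\rho}[g(\alpha)]=\int Q_\rho(\alpha)g(\alpha)d^2\alpha$. For $k,l\ge0$, $\mathcal L_{k,l}(z)=\sum_{p=0}^{\min(k,l)}\frac{\sqrt{k!}\sqrt{l!}(-1)^p}{p!(k-p)!(l-p)!}z^{l-p}z^{*(k-p)}$. For an operator $A=\sum_{k,l}A_{kl}\ket k\!\bra l$, $0<\eta<1$ and the fixed cutoff $E$: $f_A(z,\eta)=\frac1\eta e^{(1-\frac1\eta)|z|^2}\sum_{k,l=0}^E A_{kl}\eta^{-(k+l)/2}\mathcal L_{k,l}(z/\sqrt\eta)$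 and $K_A=\sum_{k,l=0}^E|A_{kl}|\sqrt{(k+1)(l+1)}$. Here $f_\Psi$ and $K_\Psi$ denote $f_A$ and $K_A$ for $A=\ket\Psi\!\bra\Psi$. *)

theory Defs
  imports "HOL-Analysis.Analysis"
begin

text \<open>Operators are represented by their Fock-basis matrix elements
  A k l = <k|A|l>, as functions nat => nat => complex.\<close>

definition coherent :: "complex \<Rightarrow> nat \<Rightarrow> complex" where
  "coherent \<alpha> n = complex_of_real (exp (- (cmod \<alpha>)\<^sup>2 / 2) / sqrt (fact n)) * \<alpha> ^ n"

definition density_op_E :: "nat \<Rightarrow> (nat \<Rightarrow> nat \<Rightarrow> complex) \<Rightarrow> bool" where
  "density_op_E E \<rho> \<longleftrightarrow>
     (\<forall>k l. (k > E \<or> l > E) \<longrightarrow> \<rho> k l = 0) \<and>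
     (\<forall>k l. \<rho> l k = cnj (\<rho> k l)) \<and>
     (\<forall>v :: nat \<Rightarrow> complex.
        Im (\<Sum>k\<le>E. \<Sum>l\<le>E. cnj (v k) * \<rho> k l * v l) = 0 \<and>
        Re (\<Sum>k\<le>E. \<Sum>l\<le>E. cnj (v k) * \<rho> k l * v l) \<ge> 0) \<and>
     (\<Sum>k\<le>E. \<rho> k k) = 1"

definition husimi :: "nat \<Rightarrow> (nat \<Rightarrow> nat \<Rightarrow> complex) \<Rightarrow> complex \<Rightarrow> complex" where
  "husimi E \<rho> \<alpha> = complex_of_real (1 / pi) *
     (\<Sum>k\<le>E. \<Sum>l\<le>E. cnj (coherent \<alpha> k) * \<rho> k l * coherent \<alpha> l)"

definition laguerre2 :: "nat \<Rightarrow> nat \<Rightarrow> complex \<Rightarrow> complex" where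
  "laguerre2 k l z = (\<Sum>p\<le>min k l.
     complex_of_real (sqrt (fact k) * sqrt (fact l) * (-1) ^ p / (fact p * fact (k - p) * fact (l - p)))
     * z ^ (l - p) * (cnj z) ^ (k - p))"

definition f_op :: "nat \<Rightarrow> (nat \<Rightarrow> nat \<Rightarrow> complex) \<Rightarrow> complex \<Rightarrow> real \<Rightarrow> complex" where
  "f_op E A z \<eta> = complex_of_real (1 / \<eta> * exp ((1 - 1 / \<eta>) * (cmod z)\<^sup>2)) *
     (\<Sum>k\<le>E. \<Sum>l\<le>E. A k l * complex_of_real (\<eta> powr (- (real (k + l)) / 2))
        * laguerre2 k l (z / complex_of_real (sqrt \<eta>)))"

definition K_op :: "nat \<Rightarrow> (nat \<Rightarrow> nat \<Rightarrow> complex) \<Rightarrow> real" where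
  "K_op E A = (\<Sum>k\<le>E. \<Sum>l\<le>E. cmod (A k l) * sqrt (real ((k + 1) * (l + 1))))"

definition proj :: "(nat \<Rightarrow> complex) \<Rightarrow> nat \<Rightarrow> nat \<Rightarrow> complex" where
  "proj \<psi> k l = \<psi> k * cnj (\<psi> l)"

definition fidelity :: "nat \<Rightarrow> (nat \<Rightarrow> complex) \<Rightarrow> (nat \<Rightarrow> nat \<Rightarrow> complex) \<Rightarrow> complex" where
  "fidelity E \<psi> \<rho> = (\<Sum>k\<le>E. \<Sum>l\<le>E. cnj (\<psi> k) * \<rho> k l * \<psi> l)"

end

theory Submission
  imports Defs "HOL-Probability.Probability" "HOL-Real_Asymp.Real_Asymp"
begin

(* Both Q_rho(alpha) and f_A(alpha, eta) are finite combinations of the Gaussian moments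
   exp(-c |z|^2) conj(z)^a z^b, whose integral over the plane is pi a! / c^(a+1) if a = b and 0
   otherwise; this follows from a recurrence obtained by integrating their derivatives along
   horizontal and vertical lines. Integrating termwise and evaluating the alternating Laguerre
   sums gives E[f_A] = tr(rho A) + sum_kl A_kl D_kl (D = husimi_f_error), where D_kl only
   involves the entries rho_mn with m - l = n - k = j > 0, weighted by eta^j sqrt(C(m, j) C(n, j)).
   Positivity of rho gives 2 s t |rho_mn| <= s^2 rho_mm + t^2 rho_nn, the hypothesis eta E < 2
   gives eta^j C(l + j, j) <= eta (l + 1), and tr rho = 1 then yields
   |D_kl| <= eta sqrt((k + 1)(l + 1)), i.e. the error is at most eta K_A. Finally
   K_Psi <= (E + 1)(E + 2)/2 by Cauchy-Schwarz and the normalisation of Psi. *)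

section \<open>Lebesgue measure on the complex plane\<close>

lemma measurable_Complex_pair [measurable]:
  "(\<lambda>p::real \<times> real. Complex (fst p) (snd p)) \<in> borel_measurable (lborel \<Otimes>\<^sub>M lborel)"
proof -
  have "(\<lambda>p::real \<times> real. Complex (fst p) (snd p)) = (\<lambda>p. of_real (fst p) + \<i> * of_real (snd p))"
    by (auto simp: complex_eq_iff)
  then show ?thesis by simp
qed

lemma lborel_complex_eq_distr_Complex:
  "(lborel :: complex measure) = distr (lborel \<Otimes>\<^sub>M lborel) borel (\<lambda>p. Complex (fst p) (snd p))"
proof (rule lborel_eqI)
  fix l u :: complex assume le: "\<And>b. b \<in> Basis \<Longrightarrow> l \<bullet> b \<le> u \<bullet> b"
  then have "Re l \<le> Re u" "Im l \<le> Im u"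
    using le[of 1] le[of \<i>] by (auto simp: Basis_complex_def)
  moreover have "(\<lambda>p. Complex (fst p) (snd p)) -` box l u \<inter> space (lborel \<Otimes>\<^sub>M lborel)
      = {Re l<..<Re u} \<times> {Im l<..<Im u}"
    by (auto simp: box_def Basis_complex_def space_pair_measure)
  ultimately show "emeasure (distr (lborel \<Otimes>\<^sub>M lborel) borel (\<lambda>p. Complex (fst p) (snd p))) (box l u)
      = (\<Prod>b\<in>Basis. (u - l) \<bullet> b)"
    by (simp add: emeasure_distr lborel.emeasure_pair_measure_Times ennreal_mult Basis_complex_def)
qed simp

lemma integrable_complex_iff_pair:
  fixes f :: "complex \<Rightarrow> 'a::{banach, second_countable_topology}"
  assumes [measurable]: "f \<in> borel_measurable borel"
  shows "integrable lborel f \<longleftrightarrow> integrable (lborel \<Otimes>\<^sub>M lborel) (\<lambda>p. f (Complex (fst p) (snd p)))"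
  by (subst lborel_complex_eq_distr_Complex, subst integrable_distr_eq) auto

lemma integral_complex_eq_iterated:
  fixes f :: "complex \<Rightarrow> 'a::{banach, second_countable_topology}"
  assumes [measurable]: "f \<in> borel_measurable borel" and f: "integrable lborel f"
  shows "(LINT z|lborel. f z) = (LINT y|lborel. LINT x|lborel. f (Complex x y))"
    and "(LINT z|lborel. f z) = (LINT x|lborel. LINT y|lborel. f (Complex x y))"
proof -
  have split: "(\<lambda>p. f (Complex (fst p) (snd p))) = (\<lambda>(x, y). f (Complex x y))"
    by auto
  have eq: "(LINT z|lborel. f z) = integral\<^sup>L (lborel \<Otimes>\<^sub>M lborel) (\<lambda>(x, y). f (Complex x y))"
    by (subst lborel_complex_eq_distr_Complex, subst integral_distr) (auto simp: split)
  have int: "integrable (lborel \<Otimes>\<^sub>M lborel) (\<lambda>(x, y). f (Complex x y))"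
    using f by (simp add: integrable_complex_iff_pair split)
  show "(LINT z|lborel. f z) = (LINT y|lborel. LINT x|lborel. f (Complex x y))"
    unfolding eq using lborel_pair.integral_snd[OF int] by simp
  show "(LINT z|lborel. f z) = (LINT x|lborel. LINT y|lborel. f (Complex x y))"
    unfolding eq using lborel_pair.integral_fst[OF int] by simp
qed

lemma integrable_product_lborel:
  fixes g h :: "real \<Rightarrow> real"
  assumes g: "integrable lborel g" and h: "integrable lborel h"
  shows "integrable (lborel \<Otimes>\<^sub>M lborel) (\<lambda>p. g (fst p) * h (snd p))"
proof (rule lborel_pair.Fubini_integrable)
  show "(\<lambda>p. g (fst p) * h (snd p)) \<in> borel_measurable (lborel \<Otimes>\<^sub>M lborel)"
    using g h by measurable
  have "(\<lambda>x. LINT y|lborel. norm (g (fst (x, y)) * h (snd (x, y)))) = (\<lambda>x. \<bar>g x\<bar> * (LINT y|lborel. \<bar>h y\<bar>))"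
    by (simp add: abs_mult)
  then show "integrable lborel (\<lambda>x. LINT y|lborel. norm (g (fst (x, y)) * h (snd (x, y))))"
    using g by simp
qed (use h in simp)

section \<open>Gaussian integrals on the real line\<close>

lemma normal_density_eq_gaussian:
  assumes "c > 0"
  shows "normal_density 0 (1 / sqrt (2 * c)) x = exp (- c * x\<^sup>2) / sqrt (pi / c)"
  using assms by (simp add: normal_density_def power_divide field_simps real_sqrt_divide)

lemma integrable_abs_power_gaussian:
  assumes c: "c > 0"
  shows "integrable lborel (\<lambda>x::real. \<bar>x\<bar> ^ k * exp (- c * x\<^sup>2))"
proof -
  have "integrable lborel (\<lambda>x. sqrt (pi / c) * (normal_density 0 (1 / sqrt (2 * c)) x * \<bar>x - 0\<bar> ^ k))"
    using integrable_normal_moment_abs[of "1 / sqrt (2 * c)" 0 k] c by (intro integrable_mult_right) auto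
  moreover have "(\<lambda>x. sqrt (pi / c) * (normal_density 0 (1 / sqrt (2 * c)) x * \<bar>x - 0\<bar> ^ k))
      = (\<lambda>x. \<bar>x\<bar> ^ k * exp (- c * x\<^sup>2))"
    using c by (auto simp: normal_density_eq_gaussian)
  ultimately show ?thesis by metis
qed

lemma integral_gaussian:
  assumes c: "c > 0"
  shows "(LINT x|lborel. exp (- c * x\<^sup>2)) = sqrt (pi / c)"
proof -
  have "(LINT x|lborel. sqrt (pi / c) * normal_density 0 (1 / sqrt (2 * c)) x) = sqrt (pi / c)"
    using c by simp
  then show ?thesis
    using c by (simp add: normal_density_eq_gaussian)
qed

lemma integrable_polynomial_gaussian:
  assumes c: "c > 0"
  shows "integrable lborel (\<lambda>x::real. (1 + \<bar>x\<bar>) ^ n * exp (- c * x\<^sup>2))"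
proof -
  have "(1 + \<bar>x\<bar>) ^ n * exp (- c * x\<^sup>2) = (\<Sum>k\<le>n. real (n choose k) * (\<bar>x\<bar> ^ k * exp (- c * x\<^sup>2)))" for x
    by (subst add.commute) (simp add: binomial_ring sum_distrib_left mult_ac)
  then show ?thesis
    using integrable_abs_power_gaussian[OF c] by simp
qed

lemma integral_derivative_eq_0_gaussian_decay:
  fixes G G' :: "real \<Rightarrow> 'a::euclidean_space"
  assumes der: "\<And>x. (G has_vector_derivative G' x) (at x)"
    and cont: "\<And>x. isCont G' x"
    and int: "integrable lborel G'"
    and c: "c > 0"
    and bound: "\<And>x. norm (G x) \<le> K * ((1 + \<bar>x\<bar>) ^ n * exp (- c * x\<^sup>2))"
  shows "(LINT x|lborel. G' x) = 0"
proof -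
  have lim: "(G \<longlongrightarrow> 0) F" if "F = at_top \<or> F = at_bot" for F
  proof (rule Lim_null_comparison)
    show "\<forall>\<^sub>F x in F. norm (G x) \<le> K * ((1 + \<bar>x\<bar>) ^ n * exp (- c * x\<^sup>2))"
      using bound by simp
    show "((\<lambda>x. K * ((1 + \<bar>x\<bar>) ^ n * exp (- c * x\<^sup>2))) \<longlongrightarrow> 0) F"
      using that c by (elim disjE; simp; real_asymp)
  qed
  have "(LBINT x=-\<infinity>..\<infinity>. G' x) = 0 - 0"
  proof (rule interval_integral_FTC_integrable)
    show "set_integrable lborel (einterval (- \<infinity>) \<infinity>) G'"
      using int by (simp add: set_integrable_def)
    show "((G \<circ> real_of_ereal) \<longlongrightarrow> 0) (at_right (- \<infinity>))"
      unfolding ereal_tendsto_simps1 using lim by simp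
    show "((G \<circ> real_of_ereal) \<longlongrightarrow> 0) (at_left \<infinity>)"
      unfolding ereal_tendsto_simps1 using lim by simp
  qed (use der cont in auto)
  then show ?thesis
    by (simp add: interval_lebesgue_integral_def set_lebesgue_integral_def)
qed

section \<open>Gaussian moments on the complex plane\<close>

definition gauss_moment :: "real \<Rightarrow> nat \<Rightarrow> nat \<Rightarrow> complex \<Rightarrow> complex" where
  "gauss_moment c a b z = of_real (exp (- c * (cmod z)\<^sup>2)) * cnj z ^ a * z ^ b"

lemma continuous_on_gauss_moment: "continuous_on UNIV (gauss_moment c a b)"
  unfolding gauss_moment_def by (intro continuous_intros)

lemma borel_measurable_gauss_moment [measurable]: "gauss_moment c a b \<in> borel_measurable borel"
  by (rule borel_measurable_continuous_onI[OF continuous_on_gauss_moment])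

lemma cnj_gauss_moment: "cnj (gauss_moment c a b z) = gauss_moment c b a z"
  by (simp add: gauss_moment_def)

lemma norm_gauss_moment_Complex_le:
  "norm (gauss_moment c a b (Complex x y))
     \<le> ((1 + \<bar>x\<bar>) ^ (a + b) * exp (- c * x\<^sup>2)) * ((1 + \<bar>y\<bar>) ^ (a + b) * exp (- c * y\<^sup>2))"
proof -
  have "cmod (Complex x y) \<le> \<bar>x\<bar> + \<bar>y\<bar>"
    using cmod_le[of "Complex x y"] by simp
  also have "\<dots> \<le> (1 + \<bar>x\<bar>) * (1 + \<bar>y\<bar>)"
    by (simp add: algebra_simps)
  finally have "norm (gauss_moment c a b (Complex x y))
      \<le> exp (- c * x\<^sup>2) * exp (- c * y\<^sup>2) * ((1 + \<bar>x\<bar>) * (1 + \<bar>y\<bar>)) ^ (a + b)"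
    by (simp add: gauss_moment_def norm_mult norm_power power_add[symmetric] cmod_power2
        exp_add[symmetric] algebra_simps power_mono)
  then show ?thesis
    by (simp add: power_mult_distrib mult_ac)
qed

lemma integrable_gauss_moment:
  assumes c: "c > 0"
  shows "integrable lborel (gauss_moment c a b)"
  unfolding integrable_complex_iff_pair[OF borel_measurable_gauss_moment]
proof (rule Bochner_Integration.integrable_bound)
  let ?g = "\<lambda>t. (1 + \<bar>t\<bar>) ^ (a + b) * exp (- c * t\<^sup>2)"
  show "integrable (lborel \<Otimes>\<^sub>M lborel) (\<lambda>p. ?g (fst p) * ?g (snd p))"
    using integrable_polynomial_gaussian[OF c] by (intro integrable_product_lborel)
  show "AE p in lborel \<Otimes>\<^sub>M lborel. norm (gauss_moment c a b (Complex (fst p) (snd p)))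
      \<le> norm (?g (fst p) * ?g (snd p))"
    using norm_gauss_moment_Complex_le by (intro AE_I2) (simp add: abs_mult)
qed simp

lemma integrable_gauss_moment_lines:
  assumes c: "c > 0"
  shows "integrable lborel (\<lambda>x. gauss_moment c a b (Complex x y))"
    and "integrable lborel (\<lambda>y. gauss_moment c a b (Complex x y))"
proof -
  let ?g = "\<lambda>t. (1 + \<bar>t\<bar>) ^ (a + b) * exp (- c * t\<^sup>2)"
  show "integrable lborel (\<lambda>x. gauss_moment c a b (Complex x y))"
  proof (rule Bochner_Integration.integrable_bound)
    show "integrable lborel (\<lambda>x. ?g y * ?g x)"
      using integrable_polynomial_gaussian[OF c] by (intro integrable_mult_right)
    show "AE x in lborel. norm (gauss_moment c a b (Complex x y)) \<le> norm (?g y * ?g x)"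
      using norm_gauss_moment_Complex_le by (intro AE_I2) (simp add: abs_mult mult.commute)
  qed (simp add: Complex_eq)
  show "integrable lborel (\<lambda>y. gauss_moment c a b (Complex x y))"
  proof (rule Bochner_Integration.integrable_bound)
    show "integrable lborel (\<lambda>y. ?g x * ?g y)"
      using integrable_polynomial_gaussian[OF c] by (intro integrable_mult_right)
    show "AE y in lborel. norm (gauss_moment c a b (Complex x y)) \<le> norm (?g x * ?g y)"
      using norm_gauss_moment_Complex_le by (intro AE_I2) (simp add: abs_mult)
  qed (simp add: Complex_eq)
qed

lemma has_vector_derivative_gauss_moment_line:
  "((\<lambda>t. gauss_moment c a b (z + of_real t * u)) has_vector_derivative
     - of_real c * (cnj u * gauss_moment c a (Suc b) (z + of_real t * u)
                    + u * gauss_moment c (Suc a) b (z + of_real t * u))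
     + of_nat a * cnj u * gauss_moment c (a - 1) b (z + of_real t * u)
     + of_nat b * u * gauss_moment c a (b - 1) (z + of_real t * u)) (at t)"
proof -
  define P where "P w = cnj z + w * cnj u" for w
  define Q where "Q w = z + w * u" for w
  define G where "G k l w = exp (- of_real c * (P w * Q w)) * P w ^ k * Q w ^ l" for k l w
  have "P (of_real t) * Q (of_real t) = of_real ((cmod (z + of_real t * u))\<^sup>2)" for t
    using complex_norm_square[of "z + of_real t * u"] by (simp add: P_def Q_def mult.commute)
  then have G_real: "G k l (of_real t) = gauss_moment c k l (z + of_real t * u)" for k l t
    by (simp add: G_def P_def Q_def gauss_moment_def of_real_exp)
  have "(G a b has_field_derivative
      - of_real c * (cnj u * G a (Suc b) w + u * G (Suc a) b w)
      + of_nat a * cnj u * G (a - 1) b w + of_nat b * u * G a (b - 1) w) (at w)" for w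
    unfolding G_def P_def Q_def
    by (auto intro!: derivative_eq_intros simp: algebra_simps)
  from has_vector_derivative_real_field[OF this]
  show ?thesis
    by (simp add: G_real)
qed

lemma integral_gauss_moment_derivative_eq_0:
  assumes c: "c > 0" and u: "u = 1 \<or> u = \<i>"
  shows "(LINT w|lborel. - of_real c * (cnj u * gauss_moment c a (Suc b) w + u * gauss_moment c (Suc a) b w)
           + of_nat a * cnj u * gauss_moment c (a - 1) b w + of_nat b * u * gauss_moment c a (b - 1) w) = 0"
    (is "(LINT w|lborel. ?D w) = 0")
proof -
  have int: "integrable lborel ?D"
    using integrable_gauss_moment[OF c] by simp
  have int_lines: "integrable lborel (\<lambda>x. ?D (Complex x y))" "integrable lborel (\<lambda>y. ?D (Complex x y))"
    for x y using integrable_gauss_moment_lines[OF c] by simp_all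
  have cont: "isCont (\<lambda>t. ?D (z + of_real t * u)) t" for z t
    unfolding gauss_moment_def by (intro continuous_intros)
  have vanish: "(LINT t|lborel. ?D (z + of_real t * u)) = 0"
    if int_line: "integrable lborel (\<lambda>t. ?D (z + of_real t * u))"
      and bound: "\<And>t. norm (gauss_moment c a b (z + of_real t * u))
                        \<le> K * ((1 + \<bar>t\<bar>) ^ (a + b) * exp (- c * t\<^sup>2))" for z K
    by (rule integral_derivative_eq_0_gaussian_decay[OF has_vector_derivative_gauss_moment_line
          cont int_line c bound])
  from u show ?thesis
  proof
    assume u1: "u = 1"
    have line: "Complex 0 y + of_real x * u = Complex x y" for x y
      by (simp add: u1 complex_eq_iff)
    have "(LINT x|lborel. ?D (Complex x y)) = 0" for y
      by (rule vanish[of "Complex 0 y" "(1 + \<bar>y\<bar>) ^ (a + b) * exp (- c * y\<^sup>2)", unfolded line])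
        (use int_lines(1) norm_gauss_moment_Complex_le[of c a b _ y] in \<open>simp_all add: mult.commute\<close>)
    then show ?thesis
      using integral_complex_eq_iterated(1)[OF _ int] by simp
  next
    assume ui: "u = \<i>"
    have line: "Complex x 0 + of_real y * u = Complex x y" for x y
      by (simp add: ui complex_eq_iff)
    have "(LINT y|lborel. ?D (Complex x y)) = 0" for x
      by (rule vanish[of "Complex x 0" "(1 + \<bar>x\<bar>) ^ (a + b) * exp (- c * x\<^sup>2)", unfolded line])
        (use int_lines(2) norm_gauss_moment_Complex_le[of c a b x] in simp_all)
    then show ?thesis
      using integral_complex_eq_iterated(2)[OF _ int] by simp
  qed
qed

lemma integral_gauss_moment_recurrence:
  assumes c: "c > 0"
  shows "of_real c * (LINT z|lborel. gauss_moment c a (Suc b) z)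
           = of_nat a * (LINT z|lborel. gauss_moment c (a - 1) b z)"
proof -
  define I where "I k l = (LINT z|lborel. gauss_moment c k l z)" for k l
  have re: "- of_real c * (I a (Suc b) + I (Suc a) b) + of_nat a * I (a - 1) b + of_nat b * I a (b - 1) = 0"
    using integral_gauss_moment_derivative_eq_0[OF c, of 1 a b]
    by (simp add: I_def integrable_gauss_moment[OF c])
  have im: "- of_real c * (- \<i> * I a (Suc b) + \<i> * I (Suc a) b) - of_nat a * \<i> * I (a - 1) b
      + of_nat b * \<i> * I a (b - 1) = 0"
    using integral_gauss_moment_derivative_eq_0[OF c, of \<i> a b]
    by (simp add: I_def integrable_gauss_moment[OF c])
  \<comment> \<open>\<open>re\<close> plus \<open>\<i>\<close> times \<open>im\<close> eliminates the moments \<open>(Suc a, b)\<close> and \<open>(a, b - 1)\<close>\<close>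
  have "\<i> * \<i> = (-1 :: complex)"
    by simp
  with re im show ?thesis
    unfolding I_def[symmetric] by algebra
qed

lemma integral_gauss_moment_0_0:
  assumes c: "c > 0"
  shows "(LINT z|lborel. gauss_moment c 0 0 z) = of_real (pi / c)"
proof -
  have "gauss_moment c 0 0 (Complex x y) = of_real (exp (- c * y\<^sup>2) * exp (- c * x\<^sup>2))" for x y
    by (simp add: gauss_moment_def cmod_power2 exp_add[symmetric] algebra_simps)
  moreover have "of_real (sqrt (pi / c)) * of_real (sqrt (pi / c)) = (of_real (pi / c) :: complex)"
    using c by (simp flip: of_real_mult)
  ultimately show ?thesis
    using integral_complex_eq_iterated(1)[OF _ integrable_gauss_moment[OF c]]
    by (simp add: integral_gaussian[OF c, simplified])
qed

lemma integral_gauss_moment: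
  assumes c: "c > 0"
  shows "(LINT z|lborel. gauss_moment c a b z) = (if a = b then of_real (pi * fact a / c ^ (a + 1)) else 0)"
proof (induction a arbitrary: b)
  case 0
  show ?case
  proof (cases b)
    case 0
    then show ?thesis
      using integral_gauss_moment_0_0[OF c] by simp
  next
    case (Suc b')
    then show ?thesis
      using integral_gauss_moment_recurrence[OF c, of 0 b'] c by simp
  qed
next
  case (Suc a)
  show ?case
  proof (cases b)
    case 0
    have "(LINT z|lborel. gauss_moment c 0 (Suc a) z) = 0"
      using integral_gauss_moment_recurrence[OF c, of 0 a] c by simp
    moreover have "(LINT z|lborel. gauss_moment c (Suc a) 0 z) = cnj (LINT z|lborel. gauss_moment c 0 (Suc a) z)"
      using Bochner_Integration.integral_cnj[of lborel "gauss_moment c 0 (Suc a)"] by (simp add: cnj_gauss_moment)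
    ultimately show ?thesis
      using 0 by simp
  next
    case (Suc b')
    have "of_real c * (LINT z|lborel. gauss_moment c (Suc a) (Suc b') z)
        = of_nat (Suc a) * (LINT z|lborel. gauss_moment c a b' z)"
      using integral_gauss_moment_recurrence[OF c, of "Suc a" b'] by simp
    then show ?thesis
      using Suc c by (auto simp: Suc.IH field_simps)
  qed
qed

section \<open>Alternating binomial sums\<close>

lemma sum_alternating_binomial_Suc:
  fixes f :: "nat \<Rightarrow> 'a::comm_ring_1"
  shows "(\<Sum>p\<le>Suc l. (-1) ^ p * of_nat (Suc l choose p) * f p)
           = (\<Sum>p\<le>l. (-1) ^ p * of_nat (l choose p) * (f p - f (Suc p)))"
proof -
  have "(\<Sum>p\<le>l. (-1) ^ p * of_nat (l choose Suc p) * f (Suc p))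
      = (\<Sum>p<l. (-1) ^ p * of_nat (l choose Suc p) * f (Suc p))"
    by (simp add: binomial_eq_0 flip: lessThan_Suc_atMost)
  then have shift: "(\<Sum>p\<le>l. (-1) ^ p * of_nat (l choose p) * f p)
      = f 0 - (\<Sum>p\<le>l. (-1) ^ p * of_nat (l choose Suc p) * f (Suc p))"
    by (simp add: sum.atMost_shift sum_negf)
  have summand: "(-1) ^ Suc p * of_nat (Suc l choose Suc p) * f (Suc p)
      = - ((-1) ^ p * of_nat (l choose p) * f (Suc p)) - (-1) ^ p * of_nat (l choose Suc p) * f (Suc p)"
    for p by (simp add: algebra_simps)
  have "(\<Sum>p\<le>Suc l. (-1) ^ p * of_nat (Suc l choose p) * f p)
      = f 0 - (\<Sum>p\<le>l. (-1) ^ p * of_nat (l choose p) * f (Suc p))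
            - (\<Sum>p\<le>l. (-1) ^ p * of_nat (l choose Suc p) * f (Suc p))"
    unfolding sum.atMost_Suc_shift summand sum_subtractf sum_negf by simp
  also have "\<dots> = (\<Sum>p\<le>l. (-1) ^ p * of_nat (l choose p) * (f p - f (Suc p)))"
    unfolding right_diff_distrib sum_subtractf shift by (simp only: diff_diff_eq add.commute)
  finally show ?thesis .
qed

lemma sum_alternating_binomial_gbinomial:
  "(\<Sum>p\<le>l. (-1) ^ p * real (l choose p) * ((x - real p) gchoose m))
     = (if l \<le> m then (x - real l) gchoose (m - l) else 0)"
proof (induction l arbitrary: x m)
  case 0
  show ?case by simp
next
  case (Suc l)
  have "(\<Sum>p\<le>Suc l. (-1) ^ p * real (Suc l choose p) * ((x - real p) gchoose m))
      = (\<Sum>p\<le>l. (-1) ^ p * real (l choose p) * ((x - real p) gchoose m))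
        - (\<Sum>p\<le>l. (-1) ^ p * real (l choose p) * ((x - 1 - real p) gchoose m))"
    using sum_alternating_binomial_Suc[of l "\<lambda>p. (x - real p) gchoose m"]
    by (simp add: right_diff_distrib sum_subtractf algebra_simps)
  also have "\<dots> = (if l \<le> m then ((x - real l) gchoose (m - l)) - ((x - 1 - real l) gchoose (m - l)) else 0)"
    by (simp add: Suc.IH)
  also have "\<dots> = (if Suc l \<le> m then (x - real (Suc l)) gchoose (m - Suc l) else 0)"
  proof (cases "Suc l \<le> m")
    case True
    then have "m - l = Suc (m - Suc l)"
      by simp
    then show ?thesis
      using True gbinomial_Suc_Suc[of "x - 1 - real l" "m - Suc l"] by (simp add: algebra_simps)
  qed auto
  finally show ?case .
qed

lemma factorial_quotient_eq_binomials:
  assumes "p \<le> k" "p \<le> l"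
  shows "fact (m + k - p) / (fact p * fact (k - p) * fact (l - p))
           = fact m / fact l * (real (l choose p) * ((real (m + k) - real p) gchoose m))"
proof -
  have fact_l: "fact l = fact p * fact (l - p) * real (l choose p)"
    by (metis binomial_fact_lemma of_nat_fact of_nat_mult \<open>p \<le> l\<close>)
  have "fact m * fact (k - p) * ((m + k - p) choose m) = (fact (m + k - p) :: nat)"
    using binomial_fact_lemma[of m "m + k - p"] assms by simp
  then have fact_mkp: "fact (m + k - p) = fact m * fact (k - p) * real ((m + k - p) choose m)"
    by (metis of_nat_fact of_nat_mult)
  have "real ((m + k - p) choose m) = (real (m + k) - real p) gchoose m"
    using assms by (simp add: binomial_gbinomial of_nat_diff)
  moreover have "real (l choose p) \<noteq> 0"
    using assms by simp
  ultimately show ?thesis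
    unfolding fact_l fact_mkp by (simp add: field_simps)
qed

lemma sum_alternating_factorial_quotients:
  assumes lmk: "l \<le> m + k"
  shows "(\<Sum>p\<le>min k l. (-1) ^ p * (fact (m + k - p) / (fact p * fact (k - p) * fact (l - p))))
           = (if l \<le> m then fact m * fact (m + k - l) / (fact l * fact k * fact (m - l)) else (0::real))"
proof -
  have "(\<Sum>p\<le>min k l. (-1) ^ p * (fact (m + k - p) / (fact p * fact (k - p) * fact (l - p))))
      = fact m / fact l * (\<Sum>p\<le>min k l. (-1) ^ p * real (l choose p) * ((real (m + k) - real p) gchoose m))"
    unfolding sum_distrib_left by (intro sum.cong refl) (simp add: factorial_quotient_eq_binomials)
  also have "(\<Sum>p\<le>min k l. (-1) ^ p * real (l choose p) * ((real (m + k) - real p) gchoose m))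
      = (\<Sum>p\<le>l. (-1) ^ p * real (l choose p) * ((real (m + k) - real p) gchoose m))"
  proof (rule sum.mono_neutral_left)
    show "\<forall>p\<in>{..l} - {..min k l}. (-1) ^ p * real (l choose p) * ((real (m + k) - real p) gchoose m) = 0"
    proof
      fix p assume "p \<in> {..l} - {..min k l}"
      then have "p \<le> l" "k < p"
        by auto
      then have "(real (m + k) - real p) gchoose m = real ((m + k - p) choose m)"
        using lmk by (simp add: binomial_gbinomial of_nat_diff)
      also have "\<dots> = 0"
        using \<open>k < p\<close> \<open>p \<le> l\<close> lmk by (simp add: binomial_eq_0)
      finally show "(-1) ^ p * real (l choose p) * ((real (m + k) - real p) gchoose m) = 0"
        by simp
    qed
  qed auto
  also have "\<dots> = (if l \<le> m then (real (m + k) - real l) gchoose (m - l) else 0)"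
    by (rule sum_alternating_binomial_gbinomial)
  also have "fact m / fact l * \<dots>
      = (if l \<le> m then fact m * fact (m + k - l) / (fact l * fact k * fact (m - l)) else 0)"
  proof (cases "l \<le> m")
    case True
    then have "(real (m + k) - real l) gchoose (m - l) = real ((m + k - l) choose (m - l))"
      by (simp add: binomial_gbinomial of_nat_diff)
    also have "\<dots> = fact (m + k - l) / (fact (m - l) * fact k)"
      using True by (simp add: binomial_fact)
    finally show ?thesis
      using True by simp
  qed simp
  finally show ?thesis .
qed

section \<open>The expectation of f_A under the Husimi function\<close>

definition laguerre_coeff :: "nat \<Rightarrow> nat \<Rightarrow> nat \<Rightarrow> real" where
  "laguerre_coeff k l p = sqrt (fact k) * sqrt (fact l) * (-1) ^ p / (fact p * fact (k - p) * fact (l - p))"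

lemma laguerre2_eq:
  "laguerre2 k l z = (\<Sum>p\<le>min k l. of_real (laguerre_coeff k l p) * z ^ (l - p) * cnj z ^ (k - p))"
  by (simp add: laguerre2_def laguerre_coeff_def)

(* Q_{|m><n|}(alpha) f_{|k><l|}(alpha, eta): the integrand for matrix units rho = |m><n|, A = |k><l|. *)
definition husimi_f_kernel :: "real \<Rightarrow> nat \<Rightarrow> nat \<Rightarrow> nat \<Rightarrow> nat \<Rightarrow> complex \<Rightarrow> complex" where
  "husimi_f_kernel \<eta> m n k l \<alpha> =
     of_real (1 / pi) * (cnj (coherent \<alpha> m) * coherent \<alpha> n) *
     (of_real (1 / \<eta> * exp ((1 - 1 / \<eta>) * (cmod \<alpha>)\<^sup>2)) *
      (of_real (\<eta> powr (- real (k + l) / 2)) * laguerre2 k l (\<alpha> / of_real (sqrt \<eta>))))"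

lemma husimi_mult_f_op:
  "husimi E \<rho> \<alpha> * f_op E A \<alpha> \<eta>
     = (\<Sum>k\<le>E. \<Sum>l\<le>E. \<Sum>m\<le>E. \<Sum>n\<le>E. A k l * \<rho> m n * husimi_f_kernel \<eta> m n k l \<alpha>)"
  unfolding husimi_def f_op_def husimi_f_kernel_def
  by (simp add: sum_distrib_left sum_distrib_right sum_divide_distrib mult_ac)

lemma husimi_f_kernel_eq:
  assumes \<eta>: "\<eta> > 0"
  shows "husimi_f_kernel \<eta> m n k l \<alpha> = (\<Sum>p\<le>min k l.
           of_real (laguerre_coeff k l p / (pi * sqrt (fact m) * sqrt (fact n)) * (1 / \<eta> ^ (k + l - p + 1)))
           * gauss_moment (1 / \<eta>) (m + k - p) (n + l - p) \<alpha>)"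
proof -
  define s where "s = sqrt \<eta>"
  have s: "s > 0"
    using \<eta> by (simp add: s_def)
  have eta_power: "1 / \<eta> ^ (k + l - p + 1) = \<eta> powr (- real (k + l) / 2) / (s ^ (l - p) * s ^ (k - p)) / \<eta>"
    if "p \<le> k" "p \<le> l" for p
  proof -
    have s_pow: "s ^ j = \<eta> powr (real j / 2)" for j
      using \<eta> by (simp add: s_def powr_half_sqrt[symmetric] powr_power)
    have "\<eta> powr (- real (k + l) / 2) / (s ^ (l - p) * s ^ (k - p)) / \<eta>
        = \<eta> powr (- real (k + l) / 2 - (real (l - p) / 2 + real (k - p) / 2) - 1)"
      using \<eta> by (simp only: s_pow powr_diff powr_add powr_one less_imp_le)
    also have "\<dots> = \<eta> powr (- real (k + l - p + 1))"
      by (rule arg_cong[where f = "\<lambda>x. \<eta> powr x"]) (use that in \<open>simp add: of_nat_diff field_simps\<close>)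
    also have "\<dots> = 1 / \<eta> ^ (k + l - p + 1)"
      using \<eta> by (simp only: powr_minus_divide powr_realpow)
    finally show ?thesis ..
  qed
  have exp_split: "of_real (exp (- ((cmod \<alpha>)\<^sup>2 / 2))) * (of_real (exp (- ((cmod \<alpha>)\<^sup>2 / 2)))
      * of_real (exp ((cmod \<alpha>)\<^sup>2 - (cmod \<alpha>)\<^sup>2 / \<eta>))) = (of_real (exp (- ((cmod \<alpha>)\<^sup>2 / \<eta>))) :: complex)"
    by (simp add: exp_add[symmetric] field_simps flip: of_real_mult)
  have "cnj \<alpha> ^ (m + k - p) = cnj \<alpha> ^ m * cnj \<alpha> ^ (k - p)" "\<alpha> ^ (n + l - p) = \<alpha> ^ n * \<alpha> ^ (l - p)"
    if "p \<le> k" "p \<le> l" for p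
    using that by (simp_all add: power_add[symmetric])
  with eta_power show ?thesis
    unfolding husimi_f_kernel_def laguerre2_eq sum_distrib_left
    by (intro sum.cong refl)
      (simp add: gauss_moment_def coherent_def laguerre_coeff_def exp_split s_def[symmetric] s power_divide field_simps)
qed

lemma integrable_husimi_f_kernel:
  assumes \<eta>: "\<eta> > 0"
  shows "integrable lborel (husimi_f_kernel \<eta> m n k l)"
proof -
  have "1 / \<eta> > 0"
    using \<eta> by simp
  then show ?thesis
    by (simp add: husimi_f_kernel_eq[OF \<eta>, abs_def] integrable_gauss_moment)
qed

definition husimi_f_weight :: "real \<Rightarrow> nat \<Rightarrow> nat \<Rightarrow> nat \<Rightarrow> real" where
  "husimi_f_weight \<eta> m n l = \<eta> ^ (m - l) * sqrt (real (m choose (m - l))) * sqrt (real (n choose (m - l)))"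

lemma husimi_f_weight_nonneg: "\<eta> \<ge> 0 \<Longrightarrow> husimi_f_weight \<eta> m n l \<ge> 0"
  by (simp add: husimi_f_weight_def)

lemma husimi_f_weight_eq_factorials:
  assumes lm: "l \<le> m" and n: "n = m + k - l"
  shows "husimi_f_weight \<eta> m n l = \<eta> ^ (m - l) * (sqrt (fact k) * sqrt (fact l) / (sqrt (fact m) * sqrt (fact n)))
           * (fact m * fact n / (fact l * fact k * fact (m - l)))"
proof -
  define sm sn sk sl sj where "sm = sqrt (fact m :: real)" and "sn = sqrt (fact n :: real)"
    and "sk = sqrt (fact k :: real)" and "sl = sqrt (fact l :: real)" and "sj = sqrt (fact (m - l) :: real)"
  have pos: "sm > 0" "sn > 0" "sk > 0" "sl > 0" "sj > 0"
    by (simp_all add: sm_def sn_def sk_def sl_def sj_def)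
  have fact_sq: "fact m = sm * sm" "fact n = sn * sn" "fact k = sk * sk" "fact l = sl * sl" "fact (m - l) = sj * sj"
    by (simp_all add: sm_def sn_def sk_def sl_def sj_def)
  have "real (m choose (m - l)) = fact m / (fact (m - l) * fact l)"
    using lm by (simp add: binomial_fact)
  then have choose_m: "sqrt (real (m choose (m - l))) = sm / (sj * sl)"
    by (simp add: sm_def sj_def sl_def real_sqrt_divide real_sqrt_mult)
  have "real (n choose (m - l)) = fact n / (fact (m - l) * fact k)"
    using lm n by (simp add: binomial_fact)
  then have choose_n: "sqrt (real (n choose (m - l))) = sn / (sj * sk)"
    by (simp add: sn_def sj_def sk_def real_sqrt_divide real_sqrt_mult)
  show ?thesis
    unfolding husimi_f_weight_def choose_m choose_n
    unfolding sm_def[symmetric] sn_def[symmetric] sk_def[symmetric] sl_def[symmetric] fact_sq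
    using pos by (simp add: field_simps)
qed

lemma integral_husimi_f_kernel_eq_sum:
  assumes \<eta>: "\<eta> > 0"
  shows "(LINT \<alpha>|lborel. husimi_f_kernel \<eta> m n k l \<alpha>) = (if m + k = n + l then
           of_real (sqrt (fact k) * sqrt (fact l) / (sqrt (fact m) * sqrt (fact n)) * (\<eta> ^ (m + k + 1) / \<eta> ^ (k + l + 1))
             * (\<Sum>p\<le>min k l. (-1) ^ p * (fact (m + k - p) / (fact p * fact (k - p) * fact (l - p)))))
           else 0)"
proof -
  define c where "c p = laguerre_coeff k l p / (pi * sqrt (fact m) * sqrt (fact n)) * (1 / \<eta> ^ (k + l - p + 1))" for p
  define C where "C = sqrt (fact k) * sqrt (fact l) / (sqrt (fact m) * sqrt (fact n)) * (\<eta> ^ (m + k + 1) / \<eta> ^ (k + l + 1))"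
  have c_eta: "1 / \<eta> > 0"
    using \<eta> by simp
  have integral: "(LINT \<alpha>|lborel. husimi_f_kernel \<eta> m n k l \<alpha>) = (\<Sum>p\<le>min k l. of_real (c p) *
      (if m + k - p = n + l - p then of_real (pi * fact (m + k - p) / (1 / \<eta>) ^ (m + k - p + 1)) else 0))"
    unfolding husimi_f_kernel_eq[OF \<eta>] c_def[symmetric]
    by (subst Bochner_Integration.integral_sum) (auto simp: integrable_gauss_moment[OF c_eta] integral_gauss_moment[OF c_eta])
  have termwise: "of_real (c p) * (if m + k - p = n + l - p
          then of_real (pi * fact (m + k - p) / (1 / \<eta>) ^ (m + k - p + 1)) else 0)
      = (of_real (C * ((-1) ^ p * (fact (m + k - p) / (fact p * fact (k - p) * fact (l - p))))) :: complex)"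
    if "m + k = n + l" and p: "p \<in> {..min k l}" for p
  proof -
    have "\<eta> ^ (m + k + 1) = \<eta> ^ (m + k - p + 1) * \<eta> ^ p" "\<eta> ^ (k + l + 1) = \<eta> ^ (k + l - p + 1) * \<eta> ^ p"
      using p by (simp_all flip: power_add)
    then have real_eq: "c p * (pi * fact (m + k - p) / (1 / \<eta>) ^ (m + k - p + 1))
        = C * ((-1) ^ p * (fact (m + k - p) / (fact p * fact (k - p) * fact (l - p))))"
      using \<eta> by (simp add: c_def C_def laguerre_coeff_def power_one_over field_simps)
    have cond: "m + k - p = n + l - p"
      using \<open>m + k = n + l\<close> by simp
    show ?thesis
      unfolding if_P[OF cond] of_real_mult[symmetric] real_eq ..
  qed
  show ?thesis
  proof (cases "m + k = n + l")
    case True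
    then have "(LINT \<alpha>|lborel. husimi_f_kernel \<eta> m n k l \<alpha>)
        = (\<Sum>p\<le>min k l. of_real (C * ((-1) ^ p * (fact (m + k - p) / (fact p * fact (k - p) * fact (l - p))))))"
      unfolding integral by (intro sum.cong refl termwise)
    then show ?thesis
      unfolding if_P[OF True] C_def[symmetric] by (simp only: of_real_sum sum_distrib_left)
  next
    case False
    then show ?thesis
      unfolding integral by (auto intro!: sum.neutral)
  qed
qed

lemma integral_husimi_f_kernel:
  assumes \<eta>: "\<eta> > 0"
  shows "(LINT \<alpha>|lborel. husimi_f_kernel \<eta> m n k l \<alpha>)
           = (if m + k = n + l \<and> l \<le> m then of_real (husimi_f_weight \<eta> m n l) else 0)"
proof (cases "m + k = n + l \<and> l \<le> m")
  case True
  have "\<eta> ^ (m + k + 1) = \<eta> ^ (m - l) * \<eta> ^ (k + l + 1)"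
    using conjunct2[OF True] by (simp flip: power_add)
  then have "\<eta> ^ (m + k + 1) / \<eta> ^ (k + l + 1) = \<eta> ^ (m - l)"
    using \<eta> by simp
  then show ?thesis
    using True sum_alternating_factorial_quotients[of l m k]
    by (simp add: integral_husimi_f_kernel_eq_sum[OF \<eta>] husimi_f_weight_eq_factorials[of l m n k])
next
  case False
  then show ?thesis
    using sum_alternating_factorial_quotients[of l m k]
    by (auto simp: integral_husimi_f_kernel_eq_sum[OF \<eta>] simp del: of_real_sum)
qed

definition husimi_f_error :: "nat \<Rightarrow> real \<Rightarrow> (nat \<Rightarrow> nat \<Rightarrow> complex) \<Rightarrow> nat \<Rightarrow> nat \<Rightarrow> complex" where
  "husimi_f_error E \<eta> \<rho> k l =
     (\<Sum>m\<le>E. \<Sum>n\<le>E. if m + k = n + l \<and> l < m then \<rho> m n * of_real (husimi_f_weight \<eta> m n l) else 0)"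

lemma integral_husimi_mult_f_op:
  assumes \<eta>: "\<eta> > 0"
  shows "(LINT \<alpha>|lborel. husimi E \<rho> \<alpha> * f_op E A \<alpha> \<eta>)
           = (\<Sum>k\<le>E. \<Sum>l\<le>E. A k l * \<rho> l k) + (\<Sum>k\<le>E. \<Sum>l\<le>E. A k l * husimi_f_error E \<eta> \<rho> k l)"
proof -
  have split: "(\<Sum>m\<le>E. \<Sum>n\<le>E. \<rho> m n * (if m + k = n + l \<and> l \<le> m then of_real (husimi_f_weight \<eta> m n l) else 0))
      = \<rho> l k + husimi_f_error E \<eta> \<rho> k l" if "k \<le> E" "l \<le> E" for k l
  proof -
    have "\<rho> m n * (if m + k = n + l \<and> l \<le> m then of_real (husimi_f_weight \<eta> m n l) else 0)
        = (if n = k then if m = l then \<rho> m n else 0 else 0)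
          + (if m + k = n + l \<and> l < m then \<rho> m n * of_real (husimi_f_weight \<eta> m n l) else 0)" for m n
    proof (cases "m = l")
      case True
      then show ?thesis
        by (simp add: husimi_f_weight_def)
    next
      case False
      then show ?thesis
        by (cases "l \<le> m") simp_all
    qed
    then show ?thesis
      using that by (simp add: sum.distrib husimi_f_error_def)
  qed
  have "(LINT \<alpha>|lborel. husimi E \<rho> \<alpha> * f_op E A \<alpha> \<eta>)
      = (\<Sum>k\<le>E. \<Sum>l\<le>E. A k l * (\<Sum>m\<le>E. \<Sum>n\<le>E. \<rho> m n *
           (if m + k = n + l \<and> l \<le> m then of_real (husimi_f_weight \<eta> m n l) else 0)))"
    by (simp add: husimi_mult_f_op Bochner_Integration.integral_sum integrable_husimi_f_kernel[OF \<eta>]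
        integral_husimi_f_kernel[OF \<eta>] sum_distrib_left mult.assoc)
  also have "\<dots> = (\<Sum>k\<le>E. \<Sum>l\<le>E. A k l * \<rho> l k + A k l * husimi_f_error E \<eta> \<rho> k l)"
    by (intro sum.cong refl) (simp add: split distrib_left)
  finally show ?thesis
    by (simp add: sum.distrib)
qed

section \<open>Density operators\<close>

lemma density_op_E_D:
  assumes "density_op_E E \<rho>"
  shows density_op_E_outside: "k > E \<or> l > E \<Longrightarrow> \<rho> k l = 0"
    and density_op_E_hermitian: "\<rho> l k = cnj (\<rho> k l)"
    and density_op_E_positive: "Im (\<Sum>k\<le>E. \<Sum>l\<le>E. cnj (v k) * \<rho> k l * v l) = 0"
      "Re (\<Sum>k\<le>E. \<Sum>l\<le>E. cnj (v k) * \<rho> k l * v l) \<ge> 0"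
    and density_op_E_trace: "(\<Sum>k\<le>E. \<rho> k k) = 1"
  using assms unfolding density_op_E_def by blast+

lemma quadratic_form_two_points:
  fixes \<rho> :: "nat \<Rightarrow> nat \<Rightarrow> complex" and x y :: complex and a b E :: nat
  assumes "a \<noteq> b" "a \<le> E" "b \<le> E"
  defines "v \<equiv> \<lambda>i. if i = a then x else if i = b then y else 0"
  shows "(\<Sum>k\<le>E. \<Sum>l\<le>E. cnj (v k) * \<rho> k l * v l)
           = cnj x * \<rho> a a * x + cnj x * \<rho> a b * y + cnj y * \<rho> b a * x + cnj y * \<rho> b b * y"
proof -
  have v: "v i = (if i = a then x else 0) + (if i = b then y else 0)" for i
    using assms(1) by (simp add: v_def)
  show ?thesis
    using assms(2,3) unfolding v
    by (simp add: distrib_left distrib_right sum.distrib if_distrib[of "\<lambda>z. z * _"] if_distrib[of "\<lambda>z. _ * z"]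
        if_distrib[of cnj] cong: if_cong)
qed

lemma density_op_E_two_point_nonneg:
  assumes \<rho>: "density_op_E E \<rho>" and ab: "a \<noteq> b" "a \<le> E" "b \<le> E"
  shows "0 \<le> Re (cnj x * \<rho> a a * x + cnj x * \<rho> a b * y + cnj y * \<rho> b a * x + cnj y * \<rho> b b * y)"
  using density_op_E_positive(2)[OF \<rho>, of "\<lambda>i. if i = a then x else if i = b then y else 0"]
  by (simp add: quadratic_form_two_points[OF ab])

lemma density_op_E_diag:
  assumes \<rho>: "density_op_E E \<rho>"
  shows "Im (\<rho> a a) = 0" and "Re (\<rho> a a) \<ge> 0"
proof -
  have "Im (\<rho> a a) = 0 \<and> Re (\<rho> a a) \<ge> 0"
  proof (cases "a \<le> E")
    case True
    define v where "v i = (if i = a then 1 else 0 :: complex)" for i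
    have "cnj (v k) * \<rho> k l * v l = (if l = a then if k = a then \<rho> k l else 0 else 0)" for k l
      by (simp add: v_def)
    then have "(\<Sum>k\<le>E. \<Sum>l\<le>E. cnj (v k) * \<rho> k l * v l) = \<rho> a a"
      using True by simp
    then show ?thesis
      using density_op_E_positive[OF \<rho>, of v] by simp
  qed (simp add: density_op_E_outside[OF \<rho>])
  then show "Im (\<rho> a a) = 0" and "Re (\<rho> a a) \<ge> 0"
    by auto
qed

lemma density_op_E_offdiag_le:
  assumes \<rho>: "density_op_E E \<rho>" and s: "s \<ge> 0" and t: "t \<ge> 0"
  shows "2 * s * t * cmod (\<rho> a b) \<le> s\<^sup>2 * Re (\<rho> a a) + t\<^sup>2 * Re (\<rho> b b)"
proof -
  consider "a = b" | "\<rho> a b = 0" | "a \<noteq> b" "a \<le> E" "b \<le> E" "\<rho> a b \<noteq> 0"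
    using density_op_E_outside[OF \<rho>, of a b] by force
  then show ?thesis
  proof cases
    case 1
    have "2 * s * t * Re (\<rho> a a) \<le> (s\<^sup>2 + t\<^sup>2) * Re (\<rho> a a)"
      using sum_squares_bound[of s t] density_op_E_diag(2)[OF \<rho>, of a] by (intro mult_right_mono) auto
    moreover have "cmod (\<rho> a a) = Re (\<rho> a a)"
      using density_op_E_diag[OF \<rho>, of a] by (simp add: cmod_eq_Re)
    ultimately show ?thesis
      using 1 by (simp add: distrib_right)
  next
    case 2
    then show ?thesis
      using density_op_E_diag(2)[OF \<rho>] by simp
  next
    case 3
    \<comment> \<open>test positivity on \<open>s e\<^sub>a - t u e\<^sub>b\<close>, where the phase \<open>u\<close> makes \<open>u \<rho>\<^sub>a\<^sub>b\<close> real\<close>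
    define r where "r = cmod (\<rho> a b)"
    define u where "u = cnj (\<rho> a b) / of_real r"
    have "r > 0"
      using 3 by (simp add: r_def)
    then have u_rho: "u * \<rho> a b = of_real r" and u_unit: "cnj u * u = 1"
      by (simp_all add: u_def r_def field_simps complex_norm_square[symmetric] power2_eq_square)
    have "cnj u * \<rho> b a = cnj (u * \<rho> a b)"
      using density_op_E_hermitian[OF \<rho>, of a b] by simp
    then have cnj_u_rho: "cnj u * \<rho> b a = of_real r"
      by (simp add: u_rho)
    let ?x = "of_real s" and ?y = "- of_real t * u"
    have "cnj ?x * \<rho> a a * ?x + cnj ?x * \<rho> a b * ?y + cnj ?y * \<rho> b a * ?x + cnj ?y * \<rho> b b * ?y
        = of_real (s\<^sup>2) * \<rho> a a + of_real (t\<^sup>2) * (cnj u * u) * \<rho> b b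
          - of_real (s * t) * (u * \<rho> a b) - of_real (s * t) * (cnj u * \<rho> b a)"
      unfolding of_real_mult power2_eq_square complex_cnj_mult complex_cnj_minus complex_cnj_complex_of_real
      by algebra
    also have "\<dots> = of_real (s\<^sup>2) * \<rho> a a + of_real (t\<^sup>2) * \<rho> b b - of_real (2 * s * t * r)"
      unfolding u_rho cnj_u_rho u_unit of_real_mult of_real_numeral by algebra
    finally show ?thesis
      using density_op_E_two_point_nonneg[OF \<rho> 3(1-3), of ?x ?y] by (simp add: r_def)
  qed
qed

section \<open>The error bound\<close>

lemma power_mult_binomial_le:
  fixes \<eta> :: real
  assumes \<eta>: "\<eta> > 0" and \<eta>E: "\<eta> * real E < 2" and j: "1 \<le> j" and ljE: "l + j \<le> E"
  shows "\<eta> ^ j * real ((l + j) choose j) \<le> \<eta> * real (l + 1)"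
  using j ljE
proof (induction j rule: nat_induct_at_least)
  case base
  then show ?case by simp
next
  case (Suc j)
  \<comment> \<open>raising \<open>j\<close> multiplies the left-hand side by \<open>\<eta> (l + j + 1) / (j + 1) \<le> \<eta> E / 2 < 1\<close>\<close>
  have ratio: "\<eta> * real (Suc (l + j)) \<le> real (Suc j)"
  proof -
    have "\<eta> * real (Suc (l + j)) \<le> \<eta> * real E"
      using Suc.prems \<eta> by (intro mult_left_mono) auto
    also have "\<dots> < 2"
      by (rule \<eta>E)
    also have "2 \<le> real (Suc j)"
      using Suc.hyps by simp
    finally show ?thesis
      by simp
  qed
  have "real ((l + Suc j) choose Suc j) * real (Suc j) = real (Suc (l + j)) * real ((l + j) choose j)"
    using Suc_times_binomial_eq[of "l + j" j] by (metis add_Suc_right of_nat_mult)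
  then have "\<eta> ^ Suc j * real ((l + Suc j) choose Suc j) * real (Suc j)
      = (\<eta> * real (Suc (l + j))) * (\<eta> ^ j * real ((l + j) choose j))"
    by (simp add: mult_ac)
  also have "\<dots> \<le> real (Suc j) * (\<eta> * real (l + 1))"
    using Suc.IH Suc.prems \<eta> by (intro mult_mono[OF ratio]) auto
  finally show ?case
    by (simp add: mult.commute)
qed

lemma sum_if_unique_le:
  fixes x :: "'b::ordered_comm_monoid_add"
  assumes "finite S" and "x \<ge> 0" and unique: "\<And>n n'. P n \<Longrightarrow> P n' \<Longrightarrow> n = n'"
  shows "(\<Sum>n\<in>S. if P n then x else 0) \<le> x"
proof (cases "\<exists>i. P i")
  case True
  then obtain i where "P i"
    by blast
  then have "(\<Sum>n\<in>S. if P n then x else 0) = (\<Sum>n\<in>S. if n = i then (if P i then x else 0) else 0)"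
    using unique by (intro sum.cong) auto
  also have "\<dots> \<le> x"
    using assms(1,2) by simp
  finally show ?thesis .
qed (use assms(2) in simp)

lemma sum_sum_if_matching_le:
  fixes X Y :: "'a \<Rightarrow> real"
  assumes "finite S" and "\<And>m. X m \<ge> 0" and "\<And>n. Y n \<ge> 0"
    and "\<And>m n n'. P m n \<Longrightarrow> P m n' \<Longrightarrow> n = n'" and "\<And>m m' n. P m n \<Longrightarrow> P m' n \<Longrightarrow> m = m'"
  shows "(\<Sum>m\<in>S. \<Sum>n\<in>S. if P m n then X m + Y n else 0) \<le> (\<Sum>m\<in>S. X m) + (\<Sum>n\<in>S. Y n)"
proof -
  have "(if P m n then X m + Y n else 0) = (if P m n then X m else 0) + (if P m n then Y n else 0)" for m n
    by simp
  then have "(\<Sum>m\<in>S. \<Sum>n\<in>S. if P m n then X m + Y n else 0)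
      = (\<Sum>m\<in>S. \<Sum>n\<in>S. if P m n then X m else 0) + (\<Sum>n\<in>S. \<Sum>m\<in>S. if P m n then Y n else 0)"
    by (simp add: sum.distrib sum.swap[of "\<lambda>m n. if P m n then Y n else 0"])
  also have "\<dots> \<le> (\<Sum>m\<in>S. X m) + (\<Sum>n\<in>S. Y n)"
    using assms by (intro add_mono sum_mono sum_if_unique_le) blast+
  finally show ?thesis .
qed

lemma norm_mult_husimi_f_weight_le:
  assumes \<rho>: "density_op_E E \<rho>" and \<eta>: "\<eta> > 0" and \<eta>E: "\<eta> * real E < 2" and \<sigma>: "\<sigma> > 0"
    and mn: "m + k = n + l" "l < m" "m \<le> E" "n \<le> E"
  shows "cmod (\<rho> m n) * husimi_f_weight \<eta> m n l
           \<le> \<eta> / 2 * (\<sigma> * real (l + 1) * Re (\<rho> m m) + real (k + 1) / \<sigma> * Re (\<rho> n n))"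
proof -
  define j where "j = m - l"
  have j: "1 \<le> j" "m = l + j" "n = k + j"
    using mn by (auto simp: j_def)
  define Cm Cn where "Cm = real (m choose j)" and "Cn = real (n choose j)"
  have C: "Cm \<ge> 0" "Cn \<ge> 0"
    by (simp_all add: Cm_def Cn_def)
  have R: "Re (\<rho> m m) \<ge> 0" "Re (\<rho> n n) \<ge> 0"
    using density_op_E_diag(2)[OF \<rho>] by auto
  have "2 * sqrt (\<sigma> * Cm) * sqrt (Cn / \<sigma>) * cmod (\<rho> m n)
      \<le> (sqrt (\<sigma> * Cm))\<^sup>2 * Re (\<rho> m m) + (sqrt (Cn / \<sigma>))\<^sup>2 * Re (\<rho> n n)"
    using \<sigma> C by (intro density_op_E_offdiag_le[OF \<rho>]) auto
  moreover have "sqrt (\<sigma> * Cm) * sqrt (Cn / \<sigma>) = sqrt Cm * sqrt Cn"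
    using \<sigma> by (simp add: real_sqrt_mult[symmetric] field_simps)
  ultimately have offdiag: "2 * (sqrt Cm * sqrt Cn) * cmod (\<rho> m n) \<le> \<sigma> * Cm * Re (\<rho> m m) + Cn / \<sigma> * Re (\<rho> n n)"
    using \<sigma> C by (simp add: mult.assoc)
  have bounds: "\<eta> ^ j * Cm \<le> \<eta> * real (l + 1)" "\<eta> ^ j * Cn \<le> \<eta> * real (k + 1)"
    using power_mult_binomial_le[OF \<eta> \<eta>E j(1)] mn unfolding Cm_def Cn_def j(2,3) by auto
  have "cmod (\<rho> m n) * husimi_f_weight \<eta> m n l = \<eta> ^ j / 2 * (2 * (sqrt Cm * sqrt Cn) * cmod (\<rho> m n))"
    by (simp add: husimi_f_weight_def Cm_def Cn_def j_def)
  also have "\<dots> \<le> \<eta> ^ j / 2 * (\<sigma> * Cm * Re (\<rho> m m) + Cn / \<sigma> * Re (\<rho> n n))"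
    using offdiag \<eta> by (intro mult_left_mono) auto
  also have "\<dots> = 1 / 2 * (\<sigma> * Re (\<rho> m m) * (\<eta> ^ j * Cm) + Re (\<rho> n n) / \<sigma> * (\<eta> ^ j * Cn))"
    by (simp add: field_simps)
  also have "\<dots> \<le> 1 / 2 * (\<sigma> * Re (\<rho> m m) * (\<eta> * real (l + 1)) + Re (\<rho> n n) / \<sigma> * (\<eta> * real (k + 1)))"
    using bounds \<sigma> R by (intro mult_left_mono add_mono) auto
  also have "\<dots> = \<eta> / 2 * (\<sigma> * real (l + 1) * Re (\<rho> m m) + real (k + 1) / \<sigma> * Re (\<rho> n n))"
    by (simp add: field_simps)
  finally show ?thesis .
qed

lemma norm_husimi_f_error_le:
  assumes \<rho>: "density_op_E E \<rho>" and \<eta>: "\<eta> > 0" and \<eta>E: "\<eta> * real E < 2"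
  shows "cmod (husimi_f_error E \<eta> \<rho> k l) \<le> \<eta> * sqrt (real ((k + 1) * (l + 1)))"
proof -
  \<comment> \<open>\<open>\<sigma> = a / b\<close> balances the two diagonal terms in \<open>norm_mult_husimi_f_weight_le\<close>\<close>
  define a b where "a = sqrt (real (k + 1))" and "b = sqrt (real (l + 1))"
  define R where "R i = Re (\<rho> i i)" for i
  define cnd where "cnd m n \<longleftrightarrow> m + k = n + l \<and> l < m" for m n
  define X Y where "X m = \<eta> / 2 * (a / b * real (l + 1) * R m)" and "Y n = \<eta> / 2 * (real (k + 1) / (a / b) * R n)"
    for m n
  have ab: "a > 0" "b > 0" "real (k + 1) = a * a" "real (l + 1) = b * b"
    by (simp_all add: a_def b_def)
  have "cmod (husimi_f_error E \<eta> \<rho> k l)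
      \<le> (\<Sum>m\<le>E. \<Sum>n\<le>E. cmod (if cnd m n then \<rho> m n * of_real (husimi_f_weight \<eta> m n l) else 0))"
    unfolding husimi_f_error_def cnd_def by (rule order_trans[OF norm_sum sum_mono[OF norm_sum]])
  also have "\<dots> \<le> (\<Sum>m\<le>E. \<Sum>n\<le>E. if cnd m n then X m + Y n else 0)"
    using norm_mult_husimi_f_weight_le[OF \<rho> \<eta> \<eta>E divide_pos_pos[OF ab(1,2)]] \<eta>
    by (intro sum_mono) (auto simp: cnd_def X_def Y_def R_def norm_mult husimi_f_weight_nonneg distrib_left)
  also have "\<dots> \<le> (\<Sum>m\<le>E. X m) + (\<Sum>n\<le>E. Y n)"
    using density_op_E_diag(2)[OF \<rho>] \<eta> ab(1,2)
    by (intro sum_sum_if_matching_le) (auto simp: X_def Y_def R_def cnd_def)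
  also have "\<dots> = \<eta> / 2 * (a / b * real (l + 1)) + \<eta> / 2 * (real (k + 1) / (a / b))"
  proof -
    have "(\<Sum>i\<le>E. R i) = 1"
      using density_op_E_trace[OF \<rho>] unfolding R_def by (metis Re_sum one_complex.sel(1))
    then show ?thesis
      by (simp add: X_def Y_def sum_distrib_left[symmetric] mult.assoc[symmetric] flip: sum_divide_distrib)
  qed
  also have "\<dots> = \<eta> * sqrt (real ((k + 1) * (l + 1)))"
  proof -
    have "sqrt (real ((k + 1) * (l + 1))) = a * b"
      by (simp only: a_def b_def of_nat_mult real_sqrt_mult)
    then show ?thesis
      using ab by (simp add: field_simps)
  qed
  finally show ?thesis .
qed

lemma K_op_proj_le:
  assumes normalised: "(\<lambda>k. (cmod (\<psi> k))\<^sup>2) sums 1"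
  shows "K_op E (proj \<psi>) \<le> real ((E + 1) * (E + 2)) / 2"
proof -
  have "K_op E (proj \<psi>) = (\<Sum>k\<le>E. cmod (\<psi> k) * sqrt (real (k + 1)))\<^sup>2"
    unfolding K_op_def Defs.proj_def power2_eq_square sum_product of_nat_mult real_sqrt_mult
    by (simp add: norm_mult mult_ac)
  also have "\<dots> \<le> (\<Sum>k\<le>E. (cmod (\<psi> k))\<^sup>2) * (\<Sum>k\<le>E. (sqrt (real (k + 1)))\<^sup>2)"
    by (rule Cauchy_Schwarz_ineq_sum)
  also have "\<dots> \<le> 1 * (\<Sum>k\<le>E. real (k + 1))"
  proof (rule mult_mono)
    show "(\<Sum>k\<le>E. (cmod (\<psi> k))\<^sup>2) \<le> 1"
      using sum_le_suminf[of "\<lambda>k. (cmod (\<psi> k))\<^sup>2" "{..E}"] normalised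
      by (simp add: sums_iff)
  qed (auto intro: sum_nonneg)
  also have "(\<Sum>k\<le>E. real (k + 1)) = real ((E + 1) * (E + 2)) / 2"
    by (induction E) (auto simp: algebra_simps)
  finally show ?thesis
    by simp
qed

lemma fidelity_eq_sum_proj: "fidelity E \<psi> \<rho> = (\<Sum>k\<le>E. \<Sum>l\<le>E. proj \<psi> k l * \<rho> l k)"
  unfolding fidelity_def Defs.proj_def by (subst sum.swap) (simp add: mult_ac)

lemma norm_trace_minus_expectation_le:
  assumes \<rho>: "density_op_E E \<rho>" and \<eta>: "\<eta> > 0" and \<eta>E: "\<eta> * real E < 2"
  shows "cmod ((\<Sum>k\<le>E. \<Sum>l\<le>E. A k l * \<rho> l k) - (LINT \<alpha>|lborel. husimi E \<rho> \<alpha> * f_op E A \<alpha> \<eta>))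
           \<le> \<eta> * K_op E A"
proof -
  have "cmod ((\<Sum>k\<le>E. \<Sum>l\<le>E. A k l * \<rho> l k) - (LINT \<alpha>|lborel. husimi E \<rho> \<alpha> * f_op E A \<alpha> \<eta>))
      = cmod (\<Sum>k\<le>E. \<Sum>l\<le>E. A k l * husimi_f_error E \<eta> \<rho> k l)"
    by (simp add: integral_husimi_mult_f_op[OF \<eta>])
  also have "\<dots> \<le> (\<Sum>k\<le>E. \<Sum>l\<le>E. cmod (A k l) * cmod (husimi_f_error E \<eta> \<rho> k l))"
    unfolding norm_mult[symmetric] by (rule order_trans[OF norm_sum sum_mono[OF norm_sum]])
  also have "\<dots> \<le> (\<Sum>k\<le>E. \<Sum>l\<le>E. cmod (A k l) * (\<eta> * sqrt (real ((k + 1) * (l + 1)))))"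
    by (intro sum_mono mult_left_mono norm_husimi_f_error_le[OF \<rho> \<eta> \<eta>E]) auto
  also have "\<dots> = \<eta> * K_op E A"
    by (simp add: K_op_def sum_distrib_left mult_ac)
  finally show ?thesis .
qed

theorem corollary1:
  fixes E :: nat and \<eta> :: real and \<psi> :: "nat \<Rightarrow> complex"
    and \<rho> :: "nat \<Rightarrow> nat \<Rightarrow> complex"
  assumes eta_pos: "0 < \<eta>" and eta_lt1: "\<eta> < 1" and eta_E: "\<eta> * real E < 2"
    and normalised: "(\<lambda>k. (cmod (\<psi> k))\<^sup>2) sums 1"
    and rho: "density_op_E E \<rho>"
  shows "cmod (fidelity E \<psi> \<rho> - (LINT \<alpha>|lborel. husimi E \<rho> \<alpha> * f_op E (proj \<psi>) \<alpha> \<eta>))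
           \<le> \<eta> * K_op E (proj \<psi>)
       \<and> \<eta> * K_op E (proj \<psi>) \<le> \<eta> / 2 * real ((E + 1) * (E + 2))"
proof
  show "cmod (fidelity E \<psi> \<rho> - (LINT \<alpha>|lborel. husimi E \<rho> \<alpha> * f_op E (proj \<psi>) \<alpha> \<eta>))
      \<le> \<eta> * K_op E (proj \<psi>)"
    using norm_trace_minus_expectation_le[OF rho eta_pos eta_E, of "proj \<psi>"]
    by (simp add: fidelity_eq_sum_proj)
  show "\<eta> * K_op E (proj \<psi>) \<le> \<eta> / 2 * real ((E + 1) * (E + 2))"
    using mult_left_mono[OF K_op_proj_le[OF normalised] less_imp_le[OF eta_pos]] by simp
qed

end
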